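(* Let $R>0$ and let $s: I\to\mathbb{R}^n$ be an arc-length parametrized curve defined on an open interval $I\subseteq\mathbb{R}$. Suppose $s$ is continuous and $R$-monotone, i.e. for every closed ball $B\subseteq\mathbb{R}^n$ of radius at most $R$, the inverse image $s^{-1}(B)$ is a connected subset of $I$. Then $s$ is differentiable at almost every point of $I$.
   Context: A closed ball is a set $\{x\in\mathbb{R}^n:\|x-a\|\le \rho\}$ with center $a$ and radius $\rho$. For $R>0$, an arc-length parametrized curve $s$ is called $R$-monotone if the inverse image under $s$ of every closed ball of radius at most $R$ is connected. *)

theory Defs
  imports "HOL-Analysis.Analysis"
begin

definition polygon_lengths :: "(real \<Rightarrow> 'a::real_normed_vector) \<Rightarrow> real \<Rightarrow> real \<Rightarrow> real set" where
  "polygon_lengths s a b =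
     {(\<Sum>i<n. norm (s (t (Suc i)) - s (t i))) | n t.
        t 0 = a \<and> t n = b \<and> (\<forall>i<n. t i \<le> t (Suc i))}"

definition has_curve_length :: "(real \<Rightarrow> 'a::real_normed_vector) \<Rightarrow> real \<Rightarrow> real \<Rightarrow> real \<Rightarrow> bool" where
  "has_curve_length s a b L \<longleftrightarrow> bdd_above (polygon_lengths s a b) \<and> Sup (polygon_lengths s a b) = L"

definition arc_length_parametrized :: "(real \<Rightarrow> 'a::real_normed_vector) \<Rightarrow> real set \<Rightarrow> bool" where
  "arc_length_parametrized s I \<longleftrightarrow> (\<forall>a\<in>I. \<forall>b\<in>I. a \<le> b \<longrightarrow> has_curve_length s a b (b - a))"

definition R_monotone :: "real \<Rightarrow> (real \<Rightarrow> 'a::euclidean_space) \<Rightarrow> real set \<Rightarrow> bool" where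
  "R_monotone R s I \<longleftrightarrow>
     (\<forall>c \<rho>. 0 < \<rho> \<and> \<rho> \<le> R \<longrightarrow> connected {t \<in> I. s t \<in> cball c \<rho>})"

end

theory Submission
  imports Defs
begin

text \<open>
  An arc-length parametrised curve is 1-Lipschitz, since the chord from s x to s y is an
  inscribed polygon. Hence the theorem is the one-dimensional Rademacher theorem applied to
  the coordinates of s.

  For a B-Lipschitz real function g, the function h t = g t + B t is monotone and Lipschitz,
  so its difference quotients at x stay bounded and converge unless, for some rationals
  p < q, they are frequently below p and frequently above q. Let E be the set of such x.
  Given an open U containing almost all of E, the Vitali covering theorem gives disjoint
  intervals in U, covering almost all of E, on which h increases by at most p times their
  length, so h maps them into a set H of measure at most p |U|. Inside them it gives disjoint
  intervals on which h increases by at least q times their length; since h is monotone their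
  images are almost disjoint subsets of H, so their union V has |V| \<le> (p/q) |U|.
  Iterating, E is covered by open sets of arbitrarily small measure.
\<close>

definition slope :: "(real \<Rightarrow> real) \<Rightarrow> real \<Rightarrow> real \<Rightarrow> real" where
  "slope h x y = (h y - h x) / (y - x)"

lemma slope_commute: "slope h x y = slope h y x"
  unfolding slope_def by (metis minus_diff_eq minus_divide_divide)

lemma slope_nonneg_if_mono_on:
  assumes "mono_on S h" "x \<in> S" "y \<in> S"
  shows "0 \<le> slope h x y"
proof (cases x y rule: le_cases)
  case le
  then show ?thesis
    using mono_onD[OF assms] by (simp add: slope_def)
next
  case ge
  then show ?thesis
    using mono_onD[OF assms(1,3,2)] by (simp add: slope_def divide_nonpos_nonpos)
qed

lemma abs_slope_le_if_lipschitz_on: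
  assumes "M-lipschitz_on S h" "x \<in> S" "y \<in> S"
  shows "\<bar>slope h x y\<bar> \<le> M"
proof (cases "y = x")
  case True
  then show ?thesis using lipschitz_on_nonneg[OF assms(1)] by (simp add: slope_def)
next
  case False
  have "\<bar>h y - h x\<bar> \<le> M * \<bar>y - x\<bar>"
    using lipschitz_onD[OF assms(1,3,2)] by (simp add: dist_real_def)
  then show ?thesis
    using False by (simp add: slope_def divide_le_eq)
qed

lemma Vitali_covering_intervals:
  fixes S U :: "real set" and P :: "real \<Rightarrow> real \<Rightarrow> bool"
  assumes fine: "\<And>x d. x \<in> S \<Longrightarrow> 0 < d \<Longrightarrow>
    \<exists>u v. u < v \<and> v - u < d \<and> x \<in> {u..v} \<and> {u..v} \<subseteq> U \<and> P u v"
  obtains C where "countable C"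
    "\<And>i. i \<in> C \<Longrightarrow> fst i < snd i \<and> {fst i..snd i} \<subseteq> U \<and> P (fst i) (snd i)"
    "pairwise (\<lambda>i j. disjnt {fst i..snd i} {fst j..snd j}) C"
    "negligible (S - (\<Union>i\<in>C. {fst i<..<snd i}))"
proof -
  define K where "K = {i. fst i < snd i \<and> {fst i..snd i} \<subseteq> U \<and> P (fst i) (snd i)}"
  define centre where "centre = (\<lambda>i::real \<times> real. (fst i + snd i) / 2)"
  define radius where "radius = (\<lambda>i::real \<times> real. (snd i - fst i) / 2)"
  have cball_eq: "cball (centre i) (radius i) = {fst i..snd i}" for i
    by (simp add: centre_def radius_def cball_eq_atLeastAtMost field_simps)
  obtain C where C: "countable C" "C \<subseteq> K"
    "pairwise (\<lambda>i j. disjnt (cball (centre i) (radius i)) (cball (centre j) (radius j))) C"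
    "negligible (S - (\<Union>i\<in>C. cball (centre i) (radius i)))"
  proof (rule Vitali_covering_theorem_cballs[of K radius S centre])
    show "0 < radius i" if "i \<in> K" for i
      using that by (auto simp: K_def radius_def)
    show "\<exists>i. i \<in> K \<and> x \<in> cball (centre i) (radius i) \<and> radius i < d"
      if xd: "x \<in> S" "0 < d" for x d
    proof -
      obtain u v where "u < v" "v - u < d" "x \<in> {u..v}" "{u..v} \<subseteq> U" "P u v"
        using fine[OF xd] by blast
      moreover have "x \<in> cball (centre (u, v)) (radius (u, v))"
        using \<open>x \<in> {u..v}\<close> by (simp only: cball_eq) simp
      ultimately show ?thesis
        by (intro exI[of _ "(u, v)"]) (auto simp: K_def radius_def simp del: mem_cball)
    qed
  qed blast
  have "negligible (\<Union>x\<in>fst ` C \<union> snd ` C. {x})"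
    using C(1) by (intro negligible_countable_Union) auto
  then have "negligible (fst ` C \<union> snd ` C)"
    by simp
  then have "negligible ((S - (\<Union>i\<in>C. cball (centre i) (radius i))) \<union> (fst ` C \<union> snd ` C))"
    using C(4) by (rule negligible_Un[rotated])
  then have "negligible (S - (\<Union>i\<in>C. {fst i<..<snd i}))"
    by (rule negligible_subset) (force simp: cball_eq)
  then show ?thesis
    using that C by (auto simp: K_def cball_eq)
qed

lemma Vitali_covering_by_slopes:
  fixes h :: "real \<Rightarrow> real"
  assumes "open U" "E \<subseteq> U" "\<And>x. x \<in> E \<Longrightarrow> frequently (\<lambda>y. P (slope h x y)) (at x)"
  obtains C where "countable C"
    "\<And>i. i \<in> C \<Longrightarrow> fst i < snd i \<and> {fst i..snd i} \<subseteq> U \<and> P (slope h (fst i) (snd i))"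
    "pairwise (\<lambda>i j. disjnt {fst i..snd i} {fst j..snd j}) C"
    "negligible (E - (\<Union>i\<in>C. {fst i<..<snd i}))"
proof (rule Vitali_covering_intervals)
  fix x d :: real
  assume "x \<in> E" "0 < d"
  then obtain e where "0 < e" "ball x e \<subseteq> U"
    using assms(1,2) open_contains_ball by blast
  have "eventually (\<lambda>y. y \<noteq> x \<and> dist y x < min d e) (at x)"
    unfolding eventually_at using \<open>0 < d\<close> \<open>0 < e\<close> by (intro exI[of _ "min d e"]) auto
  then obtain y where y: "P (slope h x y)" "y \<noteq> x" "dist y x < min d e"
    using frequently_ex[OF frequently_eventually_frequently[OF assms(3)[OF \<open>x \<in> E\<close>]]] by blast
  have "{min x y..max x y} \<subseteq> ball x e"
    using y(3) by (auto simp: dist_real_def)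
  moreover have "P (slope h (min x y) (max x y))"
    using y(1) slope_commute[of h x y] by (cases "x \<le> y") (auto simp: min_def max_def)
  ultimately show "\<exists>u v. u < v \<and> v - u < d \<and> x \<in> {u..v} \<and> {u..v} \<subseteq> U \<and> P (slope h u v)"
    using y(2,3) \<open>ball x e \<subseteq> U\<close>
    by (intro exI[of _ "min x y"] exI[of _ "max x y"]) (auto simp: dist_real_def)
qed (use that in blast)+

lemma measure_Union_image_intervals_if_mono_on:
  fixes h :: "real \<Rightarrow> real"
  assumes "mono_on W h" "finite C" "\<And>i. i \<in> C \<Longrightarrow> fst i \<le> snd i \<and> {fst i..snd i} \<subseteq> W"
    and "pairwise (\<lambda>i j. disjnt {fst i..snd i} {fst j..snd j}) C"
  shows "measure lebesgue (\<Union>i\<in>C. {h (fst i)..h (snd i)}) = (\<Sum>i\<in>C. h (snd i) - h (fst i))"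
proof -
  have in_W: "fst i \<in> W" "snd i \<in> W" if "i \<in> C" for i
    using assms(3)[OF that] by auto
  have "negligible ({h (fst i)..h (snd i)} \<inter> {h (fst j)..h (snd j)})"
    if "i \<in> C" "j \<in> C" "i \<noteq> j" for i j
  proof -
    have "snd i < fst j \<or> snd j < fst i"
      using assms(3,4) that by (force simp: pairwise_def disjnt_def)
    then have "h (snd i) \<le> h (fst j) \<or> h (snd j) \<le> h (fst i)"
      using in_W that(1,2) by (metis less_imp_le mono_onD[OF assms(1)])
    then have "{h (fst i)..h (snd i)} \<inter> {h (fst j)..h (snd j)} \<subseteq> {h (snd i), h (snd j)}"
      by auto
    then show ?thesis
      by (rule negligible_subset[rotated]) simp
  qed
  moreover have "h (fst i) \<le> h (snd i)" if "i \<in> C" for i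
    using assms(3)[OF that] in_W[OF that] by (auto intro!: mono_onD[OF assms(1)])
  ultimately show ?thesis
    using assms(2) by (simp add: measure_negligible_finite_Union_image pairwise_def)
qed

corollary measure_Union_disjoint_intervals:
  fixes C :: "(real \<times> real) set"
  assumes "finite C" "\<And>i. i \<in> C \<Longrightarrow> fst i \<le> snd i"
    and "pairwise (\<lambda>i j. disjnt {fst i..snd i} {fst j..snd j}) C"
  shows "measure lebesgue (\<Union>i\<in>C. {fst i..snd i}) = (\<Sum>i\<in>C. snd i - fst i)"
  using measure_Union_image_intervals_if_mono_on[of UNIV "\<lambda>x. x" C] assms by (simp add: mono_onI)

lemma atLeastAtMost_subset_image_if_continuous_on:
  fixes h :: "real \<Rightarrow> real"
  assumes "continuous_on {u..v} h" "u \<le> v"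
  shows "{h u..h v} \<subseteq> h ` {u..v}"
  using IVT'[of h u _ v] assms by force

lemma image_measure_le_if_slopes_below:
  fixes h :: "real \<Rightarrow> real"
  assumes "open U" "bounded U" "mono_on U h" "0 \<le> p" "E \<subseteq> U"
    and "\<And>x. x \<in> E \<Longrightarrow> frequently (\<lambda>y. slope h x y < p) (at x)"
  obtains W H where "open W" "W \<subseteq> U" "negligible (E - W)" "H \<in> lmeasurable" "h ` W \<subseteq> H"
    "measure lebesgue H \<le> p * measure lebesgue U"
proof -
  obtain C where C: "countable C"
    "\<And>i. i \<in> C \<Longrightarrow> fst i < snd i \<and> {fst i..snd i} \<subseteq> U \<and> slope h (fst i) (snd i) < p"
    "pairwise (\<lambda>i j. disjnt {fst i..snd i} {fst j..snd j}) C"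
    "negligible (E - (\<Union>i\<in>C. {fst i<..<snd i}))"
    using Vitali_covering_by_slopes[of U E "\<lambda>s. s < p" h] assms(1,5,6) by blast
  have increase_le: "h (fst i) \<le> h (snd i) \<and> h (snd i) - h (fst i) \<le> p * (snd i - fst i)"
    if "i \<in> C" for i
  proof -
    have "fst i \<in> U" "snd i \<in> U" "fst i < snd i" "slope h (fst i) (snd i) < p"
      using C(2)[OF that] by auto
    then show ?thesis
      using mono_onD[OF assms(3)] by (auto simp: slope_def divide_less_eq mult.commute)
  qed
  have "U \<in> lmeasurable"
    using assms(1,2) by (simp add: lmeasurable_open)
  have bound: "measure lebesgue (\<Union>i\<in>C'. {h (fst i)..h (snd i)}) \<le> p * measure lebesgue U"
    if "C' \<subseteq> C" "finite C'" for C'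
  proof -
    have "measure lebesgue (\<Union>i\<in>C'. {h (fst i)..h (snd i)})
        \<le> (\<Sum>i\<in>C'. measure lebesgue {h (fst i)..h (snd i)})"
      using that by (intro measure_UNION_le) auto
    also have "\<dots> \<le> (\<Sum>i\<in>C'. p * (snd i - fst i))"
      using that increase_le by (intro sum_mono) auto
    also have "\<dots> = p * measure lebesgue (\<Union>i\<in>C'. {fst i..snd i})"
    proof -
      have "measure lebesgue (\<Union>i\<in>C'. {fst i..snd i}) = (\<Sum>i\<in>C'. snd i - fst i)"
        using that C(2)
        by (intro measure_Union_disjoint_intervals pairwise_subset[OF C(3) that(1)]) (auto simp: less_imp_le)
      then show ?thesis
        by (simp add: sum_distrib_left)
    qed
    also have "\<dots> \<le> p * measure lebesgue U"
      using that C(2) \<open>U \<in> lmeasurable\<close> assms(4)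
      by (intro mult_left_mono measure_mono_fmeasurable) auto
    finally show ?thesis .
  qed
  show ?thesis
  proof
    show "open (\<Union>i\<in>C. {fst i<..<snd i})" "negligible (E - (\<Union>i\<in>C. {fst i<..<snd i}))"
      using C(4) by auto
    show "(\<Union>i\<in>C. {fst i<..<snd i}) \<subseteq> U"
      using C(2) by fastforce
    show "(\<Union>i\<in>C. {h (fst i)..h (snd i)}) \<in> lmeasurable"
      by (rule fmeasurable_UN_bound[OF C(1) _ bound]) auto
    show "measure lebesgue (\<Union>i\<in>C. {h (fst i)..h (snd i)}) \<le> p * measure lebesgue U"
      by (rule measure_UN_bound[OF C(1) _ bound]) auto
    show "h ` (\<Union>i\<in>C. {fst i<..<snd i}) \<subseteq> (\<Union>i\<in>C. {h (fst i)..h (snd i)})"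
      using C(2) by (fastforce intro!: mono_onD[OF assms(3)])
  qed
qed

lemma measure_le_if_slopes_above:
  fixes h :: "real \<Rightarrow> real"
  assumes "open W" "mono_on W h" "continuous_on W h" "0 < q" "E \<subseteq> W"
    and "H \<in> lmeasurable" "h ` W \<subseteq> H"
    and "\<And>x. x \<in> E \<Longrightarrow> frequently (\<lambda>y. q < slope h x y) (at x)"
  obtains V where "open V" "V \<subseteq> W" "negligible (E - V)" "q * measure lebesgue V \<le> measure lebesgue H"
proof -
  obtain C where C: "countable C"
    "\<And>i. i \<in> C \<Longrightarrow> fst i < snd i \<and> {fst i..snd i} \<subseteq> W \<and> q < slope h (fst i) (snd i)"
    "pairwise (\<lambda>i j. disjnt {fst i..snd i} {fst j..snd j}) C"
    "negligible (E - (\<Union>i\<in>C. {fst i<..<snd i}))"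
    using Vitali_covering_by_slopes[of W E "\<lambda>s. q < s" h] assms(1,5,8) by blast
  have increase_ge: "h (fst i) \<le> h (snd i) \<and> q * (snd i - fst i) \<le> h (snd i) - h (fst i)"
    if "i \<in> C" for i
  proof -
    have "fst i \<in> W" "snd i \<in> W" "fst i < snd i" "q < slope h (fst i) (snd i)"
      using C(2)[OF that] by auto
    then show ?thesis
      using mono_onD[OF assms(2)] by (auto simp: slope_def less_divide_eq mult.commute)
  qed
  have image_subset: "{h (fst i)..h (snd i)} \<subseteq> H" if "i \<in> C" for i
  proof -
    have "continuous_on {fst i..snd i} h"
      using C(2)[OF that] assms(3) by (blast intro: continuous_on_subset)
    then have "{h (fst i)..h (snd i)} \<subseteq> h ` {fst i..snd i}"
      using C(2)[OF that] by (intro atLeastAtMost_subset_image_if_continuous_on) auto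
    also have "\<dots> \<subseteq> H"
      using C(2)[OF that] assms(7) by blast
    finally show ?thesis .
  qed
  have bound: "measure lebesgue (\<Union>i\<in>C'. {fst i<..<snd i}) \<le> measure lebesgue H / q"
    if "C' \<subseteq> C" "finite C'" for C'
  proof -
    have "q * measure lebesgue (\<Union>i\<in>C'. {fst i<..<snd i})
        \<le> q * (\<Sum>i\<in>C'. measure lebesgue {fst i<..<snd i})"
      using that assms(4) by (intro mult_left_mono measure_UNION_le) auto
    also have "\<dots> = (\<Sum>i\<in>C'. q * (snd i - fst i))"
      using that C(2) by (auto simp: sum_distrib_left less_imp_le intro!: sum.cong)
    also have "\<dots> \<le> (\<Sum>i\<in>C'. h (snd i) - h (fst i))"
      using that increase_ge by (intro sum_mono) auto
    also have "\<dots> = measure lebesgue (\<Union>i\<in>C'. {h (fst i)..h (snd i)})"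
      using that C(2)
      by (intro measure_Union_image_intervals_if_mono_on[OF assms(2) that(2), symmetric]
          pairwise_subset[OF C(3) that(1)]) (auto simp: less_imp_le)
    also have "\<dots> \<le> measure lebesgue H"
      using that image_subset assms(6) by (intro measure_mono_fmeasurable) auto
    finally show ?thesis
      using assms(4) by (simp add: pos_le_divide_eq mult.commute)
  qed
  show ?thesis
  proof
    show "open (\<Union>i\<in>C. {fst i<..<snd i})" "negligible (E - (\<Union>i\<in>C. {fst i<..<snd i}))"
      using C(4) by auto
    show "(\<Union>i\<in>C. {fst i<..<snd i}) \<subseteq> W"
      using C(2) by fastforce
    have "measure lebesgue (\<Union>i\<in>C. {fst i<..<snd i}) \<le> measure lebesgue H / q"
      by (rule measure_UN_bound[OF C(1) _ bound]) auto
    then show "q * measure lebesgue (\<Union>i\<in>C. {fst i<..<snd i}) \<le> measure lebesgue H"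
      using assms(4) by (simp add: pos_le_divide_eq mult.commute)
  qed
qed

lemma open_subset_shrinks_on_slope_oscillation:
  fixes h :: "real \<Rightarrow> real"
  assumes "open U" "bounded U" "mono_on U h" "continuous_on U h" "0 < p" "p < q" "E \<subseteq> U"
    and "\<And>x. x \<in> E \<Longrightarrow>
      frequently (\<lambda>y. slope h x y < p) (at x) \<and> frequently (\<lambda>y. q < slope h x y) (at x)"
  obtains V where "open V" "V \<subseteq> U" "negligible (E - V)" "measure lebesgue V \<le> p / q * measure lebesgue U"
proof -
  have below: "frequently (\<lambda>y. slope h x y < p) (at x)"
    and above: "frequently (\<lambda>y. q < slope h x y) (at x)" if "x \<in> E" for x
    using assms(8)[OF that] by auto
  obtain W H where W: "open W" "W \<subseteq> U" "negligible (E - W)" and H: "H \<in> lmeasurable" "h ` W \<subseteq> H"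
    and measure_H: "measure lebesgue H \<le> p * measure lebesgue U"
    using image_measure_le_if_slopes_below[OF assms(1-3) less_imp_le[OF assms(5)] assms(7) below]
    by blast
  have "0 < q"
    using assms(5,6) by linarith
  obtain V where V: "open V" "V \<subseteq> W" "negligible (E \<inter> W - V)"
    and measure_V: "q * measure lebesgue V \<le> measure lebesgue H"
  proof (rule measure_le_if_slopes_above[of W h q "E \<inter> W" H])
    show "mono_on W h" "continuous_on W h"
      using W(2) assms(3,4) by (auto intro: mono_on_subset continuous_on_subset)
  qed (use W(1) \<open>0 < q\<close> H above in auto)
  have "negligible ((E - W) \<union> (E \<inter> W - V))"
    using W(3) V(3) by (rule negligible_Un)
  then have "negligible (E - V)"
    by (rule negligible_subset) blast
  moreover have "measure lebesgue V \<le> p / q * measure lebesgue U"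
    using measure_V measure_H assms(5,6) by (simp add: pos_le_divide_eq mult.commute)
  ultimately show ?thesis
    using that V(1,2) W(2) by blast
qed

lemma negligible_if_open_covers_shrink:
  fixes E S :: "'a::euclidean_space set"
  assumes "open S" "bounded S" "E \<subseteq> S" "0 \<le> r" "r < 1"
    and shrink: "\<And>U. open U \<Longrightarrow> U \<subseteq> S \<Longrightarrow>
      \<exists>V. open V \<and> V \<subseteq> U \<and> negligible (E \<inter> U - V) \<and>
        measure lebesgue V \<le> r * measure lebesgue U"
  shows "negligible E"
proof -
  have "\<exists>V. open V \<and> V \<subseteq> S \<and> negligible (E - V) \<and>
      measure lebesgue V \<le> r ^ n * measure lebesgue S" for n
  proof (induction n)
    case 0
    show ?case
      using assms(1,3) by (intro exI[of _ S]) auto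
  next
    case (Suc n)
    then obtain U where U: "open U" "U \<subseteq> S" "negligible (E - U)"
      "measure lebesgue U \<le> r ^ n * measure lebesgue S"
      by blast
    obtain V where V: "open V" "V \<subseteq> U" "negligible (E \<inter> U - V)"
      "measure lebesgue V \<le> r * measure lebesgue U"
      using shrink[OF U(1,2)] by blast
    have "negligible ((E - U) \<union> (E \<inter> U - V))"
      using U(3) V(3) by (rule negligible_Un)
    then have "negligible (E - V)"
      by (rule negligible_subset) blast
    moreover have "measure lebesgue V \<le> r ^ Suc n * measure lebesgue S"
      using order_trans[OF V(4) mult_left_mono[OF U(4) assms(4)]] by (simp add: mult.assoc)
    ultimately show ?case
      using U(2) V(1,2) by blast
  qed
  then have small: "\<exists>V. V \<in> lmeasurable \<and> negligible (E - V) \<and>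
      measure lebesgue V \<le> r ^ n * measure lebesgue S" for n
    by (meson assms(2) bounded_subset lmeasurable_open)
  show ?thesis
    unfolding negligible_outer_le
  proof (intro allI impI)
    fix e :: real
    assume "0 < e"
    obtain n where n: "r ^ n * measure lebesgue S \<le> e"
    proof (cases "measure lebesgue S = 0")
      case False
      then have "0 < measure lebesgue S"
        using measure_nonneg[of lebesgue S] by linarith
      moreover obtain n where "r ^ n < e / measure lebesgue S"
        using real_arch_pow_inv[of "e / measure lebesgue S" r] \<open>0 < e\<close> calculation assms(5) by auto
      ultimately show ?thesis
        using that by (simp add: pos_less_divide_eq) (meson less_imp_le)
    qed (use \<open>0 < e\<close> in auto)
    obtain V where V: "V \<in> lmeasurable" "negligible (E - V)" "measure lebesgue V \<le> r ^ n * measure lebesgue S"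
      using small[of n] by blast
    show "\<exists>T. E \<subseteq> T \<and> T \<in> lmeasurable \<and> measure lebesgue T \<le> e"
    proof (intro exI conjI)
      show "E \<subseteq> V \<union> (E - V)"
        by blast
      show "V \<union> (E - V) \<in> lmeasurable"
        using fmeasurable.Un[OF V(1) negligible_imp_measurable[OF V(2)]] .
      have "measure lebesgue (V \<union> (E - V)) \<le> measure lebesgue V + measure lebesgue (E - V)"
        using V(1,2) by (intro measure_Un_le) (auto intro: negligible_imp_sets)
      then show "measure lebesgue (V \<union> (E - V)) \<le> e"
        using V n by (simp add: negligible_imp_measure0)
    qed
  qed
qed

lemma tendsto_if_no_rational_oscillation:
  fixes Q :: "'a \<Rightarrow> real"
  assumes "F \<noteq> bot" "eventually (\<lambda>y. l \<le> Q y) F" "eventually (\<lambda>y. Q y \<le> u) F"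
    and no_oscillation: "\<And>p q. p \<in> \<rat> \<Longrightarrow> q \<in> \<rat> \<Longrightarrow> p < q \<Longrightarrow>
      \<not> (frequently (\<lambda>y. Q y < p) F \<and> frequently (\<lambda>y. q < Q y) F)"
  shows "\<exists>c. (Q \<longlongrightarrow> c) F"
proof
  define S where "S = {r. eventually (\<lambda>y. r \<le> Q y) F}"
  have "l \<in> S"
    using assms(2) by (simp add: S_def)
  have "bdd_above S"
  proof (rule bdd_aboveI)
    fix r assume "r \<in> S"
    then have "eventually (\<lambda>y. r \<le> Q y \<and> Q y \<le> u) F"
      using assms(3) by (simp add: S_def eventually_conj)
    then show "r \<le> u"
      using eventually_happens'[OF assms(1)] by fastforce
  qed
  show "(Q \<longlongrightarrow> Sup S) F"
  proof (rule order_tendstoI)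
    fix a assume "a < Sup S"
    then obtain r where "r \<in> S" "a < r"
      using less_cSup_iff[of S a] \<open>l \<in> S\<close> \<open>bdd_above S\<close> by auto
    then show "eventually (\<lambda>y. a < Q y) F"
      unfolding S_def by (auto elim: eventually_mono)
  next
    fix a assume "Sup S < a"
    obtain p where p: "p \<in> \<rat>" "Sup S < p" "p < a"
      using Rats_dense_in_real[OF \<open>Sup S < a\<close>] by blast
    obtain q where q: "q \<in> \<rat>" "p < q" "q < a"
      using Rats_dense_in_real[OF \<open>p < a\<close>] by blast
    have "p \<notin> S"
      using p(2) cSup_upper[OF _ \<open>bdd_above S\<close>] by force
    then have "frequently (\<lambda>y. Q y < p) F"
      by (simp add: S_def frequently_def not_less)
    then have "\<not> frequently (\<lambda>y. q < Q y) F"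
      using no_oscillation[OF p(1) q(1,2)] by blast
    then show "eventually (\<lambda>y. Q y < a) F"
      unfolding not_frequently by (rule eventually_mono) (use q(3) in auto)
  qed
qed

lemma differentiable_at_if_no_rational_oscillation:
  fixes h :: "real \<Rightarrow> real"
  assumes "open S" "x \<in> S" "M-lipschitz_on S h"
    and "\<And>p q. p \<in> \<rat> \<Longrightarrow> q \<in> \<rat> \<Longrightarrow> p < q \<Longrightarrow>
      \<not> (frequently (\<lambda>y. slope h x y < p) (at x) \<and> frequently (\<lambda>y. q < slope h x y) (at x))"
  shows "h differentiable (at x)"
proof -
  have "eventually (\<lambda>y. \<bar>slope h x y\<bar> \<le> M) (at x)"
    using eventually_at_in_open'[OF assms(1,2)]
    by (rule eventually_mono) (use abs_slope_le_if_lipschitz_on[OF assms(3,2)] in blast)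
  then have "eventually (\<lambda>y. - M \<le> slope h x y) (at x)" "eventually (\<lambda>y. slope h x y \<le> M) (at x)"
    by (auto elim: eventually_mono)
  then obtain c where "(slope h x \<longlongrightarrow> c) (at x)"
    using tendsto_if_no_rational_oscillation[OF at_neq_bot _ _ assms(4)] by blast
  then have "(h has_real_derivative c) (at x)"
    unfolding has_field_derivative_iff slope_def .
  then show ?thesis
    by (auto simp: has_field_derivative_def differentiable_def)
qed

lemma negligible_slope_oscillation_set:
  fixes h :: "real \<Rightarrow> real"
  assumes "open S" "bounded S" "mono_on S h" "continuous_on S h" "p < q"
  shows "negligible {x \<in> S. frequently (\<lambda>y. slope h x y < p) (at x) \<and>
    frequently (\<lambda>y. q < slope h x y) (at x)}"
    (is "negligible ?E")
proof (cases "0 < p")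
  case True
  show ?thesis
  proof (rule negligible_if_open_covers_shrink[OF assms(1,2)])
    show "?E \<subseteq> S" "0 \<le> p / q" "p / q < 1"
      using True assms(5) by auto
    fix U assume "open U" "U \<subseteq> S"
    moreover have "bounded U" "mono_on U h" "continuous_on U h"
      using \<open>U \<subseteq> S\<close> assms(2-4) by (auto intro: bounded_subset mono_on_subset continuous_on_subset)
    ultimately obtain V where "open V" "V \<subseteq> U" "negligible (?E \<inter> U - V)"
      "measure lebesgue V \<le> p / q * measure lebesgue U"
      using open_subset_shrinks_on_slope_oscillation[of U h p q "?E \<inter> U"] True assms(5) by blast
    then show "\<exists>V. open V \<and> V \<subseteq> U \<and> negligible (?E \<inter> U - V) \<and>
        measure lebesgue V \<le> p / q * measure lebesgue U"
      by blast
  qed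
next
  case False
  have "\<not> frequently (\<lambda>y. slope h x y < p) (at x)" if "x \<in> S" for x
  proof -
    have "eventually (\<lambda>y. 0 \<le> slope h x y) (at x)"
      using eventually_at_in_open'[OF assms(1) that]
      by (rule eventually_mono) (use slope_nonneg_if_mono_on[OF assms(3) that] in blast)
    then show ?thesis
      unfolding not_frequently by (rule eventually_mono) (use False in auto)
  qed
  then have "?E = {}"
    by blast
  then show ?thesis
    by (simp only: negligible_empty)
qed

lemma negligible_not_differentiable_if_mono_lipschitz:
  fixes h :: "real \<Rightarrow> real"
  assumes "open S" "bounded S" "mono_on S h" "M-lipschitz_on S h"
  shows "negligible {x \<in> S. \<not> h differentiable (at x)}"
proof -
  define E where "E pq = {x \<in> S. frequently (\<lambda>y. slope h x y < fst pq) (at x) \<and>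
    frequently (\<lambda>y. snd pq < slope h x y) (at x)}" for pq :: "real \<times> real"
  define PQ :: "(real \<times> real) set" where "PQ = {pq \<in> \<rat> \<times> \<rat>. fst pq < snd pq}"
  have "countable PQ"
    unfolding PQ_def by (rule countable_subset[of _ "\<rat> \<times> \<rat>"]) (auto simp: countable_rat)
  moreover have "negligible (E pq)" if "pq \<in> PQ" for pq
    using that assms(1-3) lipschitz_on_continuous_on[OF assms(4)]
    unfolding E_def PQ_def by (intro negligible_slope_oscillation_set) auto
  ultimately have "negligible (\<Union>(E ` PQ))"
    by (intro negligible_countable_Union) auto
  moreover have "{x \<in> S. \<not> h differentiable (at x)} \<subseteq> \<Union>(E ` PQ)"
    using differentiable_at_if_no_rational_oscillation[OF assms(1) _ assms(4)]
    by (fastforce simp: E_def PQ_def)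
  ultimately show ?thesis
    by (rule negligible_subset)
qed

lemma negligible_not_differentiable_if_lipschitz_real:
  fixes g :: "real \<Rightarrow> real"
  assumes "open S" "B-lipschitz_on S g"
  shows "negligible {x \<in> S. \<not> g differentiable (at x)}"
proof -
  define h where "h x = g x + B * x" for x
  have "mono_on S h"
  proof (rule mono_onI)
    fix x y assume "x \<in> S" "y \<in> S" "x \<le> y"
    then have "g x - g y \<le> B * (y - x)"
      using lipschitz_onD[OF assms(2), of x y] by (simp add: dist_real_def abs_le_iff)
    then show "h x \<le> h y"
      by (simp add: h_def algebra_simps)
  qed
  have "(B + B * 1)-lipschitz_on S h"
    unfolding h_def
    by (intro lipschitz_on_add assms(2) lipschitz_on_cmult_real_nonneg lipschitz_on_id lipschitz_on_nonneg[OF assms(2)])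
  have "negligible {x \<in> S \<inter> ball 0 (real n). \<not> h differentiable (at x)}" for n
    using \<open>mono_on S h\<close> \<open>(B + B * 1)-lipschitz_on S h\<close> assms(1)
    by (intro negligible_not_differentiable_if_mono_lipschitz) (auto intro: mono_on_subset lipschitz_on_subset)
  then have "negligible (\<Union>n. {x \<in> S \<inter> ball 0 (real n). \<not> h differentiable (at x)})"
    by (intro negligible_countable_Union) auto
  moreover have "{x \<in> S. \<not> g differentiable (at x)} \<subseteq>
      (\<Union>n. {x \<in> S \<inter> ball 0 (real n). \<not> h differentiable (at x)})"
  proof
    fix x assume x: "x \<in> {x \<in> S. \<not> g differentiable (at x)}"
    obtain n where "norm x < real n"
      using reals_Archimedean2 by blast
    moreover have "\<not> h differentiable (at x)"
    proof
      assume "h differentiable (at x)"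
      then have "(\<lambda>t. h t - B * t) differentiable (at x)"
        by (intro differentiable_diff) auto
      then show False
        using x by (simp add: h_def)
    qed
    ultimately show "x \<in> (\<Union>n. {x \<in> S \<inter> ball 0 (real n). \<not> h differentiable (at x)})"
      using x by auto
  qed
  ultimately show ?thesis
    by (rule negligible_subset)
qed

theorem negligible_not_differentiable_if_lipschitz:
  fixes f :: "real \<Rightarrow> 'a::euclidean_space"
  assumes "open S" "B-lipschitz_on S f"
  shows "negligible {x \<in> S. \<not> f differentiable (at x)}"
proof -
  have "B-lipschitz_on S (\<lambda>t. f t \<bullet> k)" if "k \<in> Basis" for k
  proof (rule lipschitz_onI)
    fix x y assume "x \<in> S" "y \<in> S"
    have "\<bar>(f x - f y) \<bullet> k\<bar> \<le> norm (f x - f y)"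
      using Basis_le_norm[OF that] .
    then show "dist (f x \<bullet> k) (f y \<bullet> k) \<le> B * dist x y"
      using lipschitz_onD[OF assms(2) \<open>x \<in> S\<close> \<open>y \<in> S\<close>]
      by (simp add: dist_real_def dist_norm inner_diff_left)
  qed (rule lipschitz_on_nonneg[OF assms(2)])
  then have "negligible (\<Union>k\<in>Basis. {x \<in> S. \<not> (\<lambda>t. f t \<bullet> k) differentiable (at x)})"
    using assms(1) by (intro negligible_Union) (auto intro: negligible_not_differentiable_if_lipschitz_real)
  moreover have "{x \<in> S. \<not> f differentiable (at x)} \<subseteq>
      (\<Union>k\<in>Basis. {x \<in> S. \<not> (\<lambda>t. f t \<bullet> k) differentiable (at x)})"
  proof
    fix x assume x: "x \<in> {x \<in> S. \<not> f differentiable (at x)}"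
    show "x \<in> (\<Union>k\<in>Basis. {x \<in> S. \<not> (\<lambda>t. f t \<bullet> k) differentiable (at x)})"
    proof (rule ccontr)
      assume "\<not> ?thesis"
      then have "(\<lambda>t. \<Sum>k\<in>Basis. (f t \<bullet> k) *\<^sub>R k) differentiable (at x)"
        using x by (intro differentiable_sum) auto
      then show False
        using x by (simp add: euclidean_representation)
    qed
  qed
  ultimately show ?thesis
    by (rule negligible_subset)
qed

lemma lipschitz_on_if_arc_length_parametrized:
  fixes s :: "real \<Rightarrow> 'a::real_normed_vector"
  assumes "arc_length_parametrized s I"
  shows "1-lipschitz_on I s"
proof (rule lipschitz_on_leI)
  fix x y assume "x \<in> I" "y \<in> I" "x \<le> y"
  then have length: "has_curve_length s x y (y - x)"
    using assms unfolding arc_length_parametrized_def by blast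
  have "norm (s y - s x) \<in> polygon_lengths s x y"
    unfolding polygon_lengths_def
    by (rule CollectI, rule exI[of _ "1::nat"], rule exI[of _ "\<lambda>i. if i = 0 then x else y"])
      (use \<open>x \<le> y\<close> in auto)
  then have "norm (s y - s x) \<le> y - x"
    using length unfolding has_curve_length_def by (metis cSup_upper)
  then show "dist (s x) (s y) \<le> 1 * dist x y"
    using \<open>x \<le> y\<close> by (simp add: dist_norm norm_minus_commute dist_real_def)
qed simp

theorem mainTheorem1:
  fixes R :: real and s :: "real \<Rightarrow> 'n::euclidean_space" and I :: "real set"
  assumes "R > 0"
    and "open I" and "is_interval I"
    and "arc_length_parametrized s I"
    and "continuous_on I s"
    and "R_monotone R s I"
  shows "AE t in lborel. t \<in> I \<longrightarrow> s differentiable (at t)"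
proof -
  have "negligible {t \<in> I. \<not> s differentiable (at t)}"
    using assms(2) lipschitz_on_if_arc_length_parametrized[OF assms(4)]
    by (rule negligible_not_differentiable_if_lipschitz)
  then have "AE t in lebesgue. t \<notin> {t \<in> I. \<not> s differentiable (at t)}"
    by (intro AE_not_in) (simp add: negligible_iff_null_sets)
  then have "AE t in lebesgue. t \<in> I \<longrightarrow> s differentiable (at t)"
    by (rule AE_mp) auto
  then show ?thesis
    by (simp add: AE_completion_iff)
qed

end
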